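(* Let $n\ge 1$ and let $G$ be a finite group of permutations of $[2n]=\{1,\dots,2n\}$ acting on the circuit $\Delta_{2n}$ (i.e. $G$ is a group of automorphisms of the cycle graph $\Delta_{2n}=(1\,2\,\dots\,2n)$). Then the number of equivalence classes of $n$-diagrams under the action of $G$ equals \[ \frac{1}{|S_n \wr S_2| \cdot |G|} \sum_{\pi \in S_n \wr S_2} \sum_{\eta \in G} \; \prod_i i^{\pi_i} \: \eta_i \: (\eta_i - 1) \: \cdots \: (\eta_i - \pi_i + 1), \] where $\pi$ has cycle type $1^{\pi_1}2^{\pi_2}\cdots(2n)^{\pi_{2n}}$ as a permutation of $[n]\times[2]$, $\eta$ has cycle type $1^{\eta_1}2^{\eta_2}\cdots(2n)^{\eta_{2n}}$ as a permutation of $[2n]$, the product is taken over all $i\in[2n]$ with $\pi_i>0$, and the product is understood to be $0$ if $\pi_i>\eta_i$ for some $i$.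
   Context: A chord diagram of order $n$ (an $n$-diagram) is a 3-regular graph on vertex set $[2n]$ containing the $2n$-circuit $\Delta_{2n}=(1\,2\,\dots\,2n)$ as a subgraph; the edges of $\Delta_{2n}$ form the circle, the remaining edges are the chords (so the chords form a perfect matching of $[2n]$). Given a group $G$ acting on $\Delta_{2n}$, two $n$-diagrams $\Gamma_1,\Gamma_2$ are equivalent if there is $g\in G$ taking the chords of $\Gamma_1$ to the chords of $\Gamma_2$. The wreath product $S_n\wr S_2$ consists of pairs $(\tau,\bar\sigma)$ with $\tau\in S_n$, $\bar\sigma=(\sigma_1,\dots,\sigma_n)\in S_2^n$, acting on $[n]\times[2]$ by $(\tau,\bar\sigma)\cdot(i,j)=(\tau(i),\sigma_i(j))$; it has order $2^n n!$. *)

theory Defs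
  imports Complex_Main "HOL-Combinatorics.Permutations" "HOL-Combinatorics.Orbits"
begin

definition circ_adj :: "nat \<Rightarrow> nat \<Rightarrow> nat \<Rightarrow> bool" where
  "circ_adj n i j \<longleftrightarrow> i \<in> {1..2*n} \<and> j \<in> {1..2*n} \<and>
     (j = i mod (2*n) + 1 \<or> i = j mod (2*n) + 1)"

definition circuit_perm_group :: "nat \<Rightarrow> (nat \<Rightarrow> nat) set \<Rightarrow> bool" where
  "circuit_perm_group n G \<longleftrightarrow>
     G \<noteq> {} \<and> finite G \<and>
     (\<forall>g\<in>G. g permutes {1..2*n}) \<and>
     (\<forall>g\<in>G. \<forall>h\<in>G. g \<circ> h \<in> G) \<and>
     (\<forall>g\<in>G. inv g \<in> G) \<and>
     (\<forall>g\<in>G. \<forall>i j. circ_adj n i j \<longleftrightarrow> circ_adj n (g i) (g j))"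

definition chord_diagram :: "nat \<Rightarrow> nat set set \<Rightarrow> bool" where
  "chord_diagram n M \<longleftrightarrow>
     (\<forall>e\<in>M. e \<subseteq> {1..2*n} \<and> card e = 2) \<and>
     (\<forall>x\<in>{1..2*n}. \<exists>!e. e \<in> M \<and> x \<in> e)"

definition diagram_equiv :: "nat \<Rightarrow> (nat \<Rightarrow> nat) set \<Rightarrow> (nat set set \<times> nat set set) set" where
  "diagram_equiv n G = {(M1, M2). chord_diagram n M1 \<and> chord_diagram n M2 \<and>
       (\<exists>g\<in>G. (\<lambda>e. g ` e) ` M1 = M2)}"

definition wreath :: "nat \<Rightarrow> (nat \<times> nat \<Rightarrow> nat \<times> nat) set" where
  "wreath n = {p. \<exists>\<tau> \<sigma>. \<tau> permutes {1..n} \<and> (\<forall>i\<in>{1..n}. \<sigma> i permutes {1..2}) \<and>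
      p = (\<lambda>(i,j). if (i,j) \<in> {1..n} \<times> {1..2} then (\<tau> i, \<sigma> i j) else (i,j))}"

definition cyc_count :: "('a \<Rightarrow> 'a) \<Rightarrow> 'a set \<Rightarrow> nat \<Rightarrow> nat" where
  "cyc_count p A k = card {C. \<exists>x\<in>A. C = orbit p x \<and> card C = k}"

definition falling :: "nat \<Rightarrow> nat \<Rightarrow> real" where
  "falling m r = (\<Prod>k<r. real m - real k)"

end

(*
  An n-diagram is the image of a bijection f from the chord ends [n] x [2] onto the points
  [2n] of the circle, chord i being f({i} x [2]).  Two such labellings give the same diagram
  exactly when they differ by an element of the wreath product W = S_n wr S_2, which acts
  freely on them.  Hence for a permutation eta of the circle the pairs (pi, f) with
  f o pi = eta o f number |W| times the diagrams fixed by eta, and by Burnside's lemma the sum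
  over eta in G is |W| |G| times the number of classes.  On the other hand, for fixed pi and
  eta such an f maps each i-cycle of pi onto an i-cycle of eta and is determined by the image
  of one point of each cycle, which gives the factor i^(pi_i) (eta_i)_(pi_i).
*)

theory Submission
  imports Defs "HOL-Algebra.Group_Action"
begin

hide_const (open) Group_Action.orbit

lemma restrict_eq_iff: "restrict f A = restrict g A \<longleftrightarrow> (\<forall>x\<in>A. f x = g x)"
  by (metis restrict_apply' restrict_ext)

lemma card_fiber_inj_on:
  assumes "inj_on h A"
  shows "card {x \<in> A. h x = y} = (if y \<in> h ` A then 1 else 0)"
proof (cases "y \<in> h ` A")
  case True
  then obtain x where "x \<in> A" "y = h x"
    by blast
  then have "{x \<in> A. h x = y} = {x}"
    using assms by (auto dest: inj_onD)
  then show ?thesis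
    using True by simp
next
  case False
  then have "{x \<in> A. h x = y} = {}"
    by blast
  then show ?thesis
    using False by (simp only: card.empty if_False)
qed

lemma sum_card_filter_swap:
  assumes "finite A" "finite B"
  shows "(\<Sum>a\<in>A. card {b \<in> B. P a b}) = (\<Sum>b\<in>B. card {a \<in> A. P a b})"
proof -
  have "(\<Sum>a\<in>A. card {b \<in> B. P a b}) = (\<Sum>a\<in>A. \<Sum>b\<in>B. if P a b then 1 else 0)"
    using assms(2) by (simp add: sum.inter_filter[symmetric])
  also have "\<dots> = (\<Sum>b\<in>B. \<Sum>a\<in>A. if P a b then 1 else 0)"
    by (rule sum.swap)
  also have "\<dots> = (\<Sum>b\<in>B. card {a \<in> A. P a b})"
    using assms(1) by (simp add: sum.inter_filter[symmetric])
  finally show ?thesis .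
qed

section \<open>Orbits of a bijection of a finite set\<close>

lemma bij_betw_imp_perm_restrict_permutes:
  assumes "bij_betw p A A" shows "perm_restrict p A permutes A"
proof (rule bij_imp_permutes)
  show "bij_betw (perm_restrict p A) A A"
    using assms by (rule bij_betw_cong[THEN iffD1, rotated]) (simp add: perm_restrict_def)
qed (simp add: perm_restrict_def)

lemma orbit_perm_restrict:
  assumes "bij_betw p A A" "x \<in> A" shows "orbit (perm_restrict p A) x = orbit p x"
  using assms by (intro orbit_cong0[of x A]) (auto simp: perm_restrict_def dest: bij_betwE)

lemma cyc_count_altdef: "cyc_count p A k = card {C \<in> orbit p ` A. card C = k}"
  unfolding cyc_count_def by (rule arg_cong[where f = card]) auto

context
  fixes p :: "'a \<Rightarrow> 'a" and A :: "'a set"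
  assumes fin: "finite A" and bij: "bij_betw p A A"
begin

lemma bij_betw_self_in_orbit: "x \<in> A \<Longrightarrow> x \<in> orbit p x"
proof -
  assume x: "x \<in> A"
  have "permutation (perm_restrict p A)"
    using bij_betw_imp_perm_restrict_permutes[OF bij] fin permutation_permutes by blast
  then show ?thesis
    using permutation_self_in_orbit orbit_perm_restrict[OF bij x] by metis
qed

lemma bij_betw_orbit_subset: "x \<in> A \<Longrightarrow> orbit p x \<subseteq> A"
  using permutes_orbit_subset[OF bij_betw_imp_perm_restrict_permutes[OF bij]]
    orbit_perm_restrict[OF bij] by blast

lemma bij_betw_finite_orbit: "x \<in> A \<Longrightarrow> finite (orbit p x)"
  using bij_betw_orbit_subset fin finite_subset by blast

lemma bij_betw_orbit_eq: "x \<in> A \<Longrightarrow> y \<in> orbit p x \<Longrightarrow> orbit p y = orbit p x"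
  by (rule orbit_cyclic_eq3) (auto simp: cyclic_on_def intro: bij_betw_self_in_orbit)

lemma bij_betw_orbit_eq_iff: "x \<in> A \<Longrightarrow> y \<in> A \<Longrightarrow> orbit p y = orbit p x \<longleftrightarrow> y \<in> orbit p x"
  using bij_betw_orbit_eq bij_betw_self_in_orbit by blast

lemma bij_betw_on_orbit: "x \<in> A \<Longrightarrow> bij_betw p (orbit p x) (orbit p x)"
proof -
  assume x: "x \<in> A"
  have "inj_on p (orbit p x)"
    using bij bij_betw_orbit_subset[OF x] by (meson bij_betw_imp_inj_on inj_on_subset)
  moreover have "p ` orbit p x = orbit p x"
    using bij_betw_finite_orbit[OF x] calculation by (intro endo_inj_surj) (auto intro: orbit.step)
  ultimately show ?thesis by (simp add: bij_betw_def)
qed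

lemma bij_betw_Diff_orbit: "x \<in> A \<Longrightarrow> bij_betw p (A - orbit p x) (A - orbit p x)"
  using bij bij_betw_on_orbit bij_betw_orbit_subset by (intro bij_betw_DiffI) auto

lemma card_Diff_orbit: "x \<in> A \<Longrightarrow> card (A - orbit p x) = card A - card (orbit p x)"
  using bij_betw_orbit_subset bij_betw_finite_orbit by (simp add: card_Diff_subset)

lemma card_orbit_le: "x \<in> A \<Longrightarrow> card (orbit p x) \<le> card A"
  using bij_betw_orbit_subset fin by (simp add: card_mono)

lemma card_orbit_pos: "x \<in> A \<Longrightarrow> 0 < card (orbit p x)"
  using bij_betw_self_in_orbit bij_betw_finite_orbit by (auto simp: card_gt_0_iff)

lemma cyc_count_Diff_orbit:
  assumes x: "x \<in> A"
  defines "k \<equiv> card (orbit p x)"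
  shows "cyc_count p (A - orbit p x) = (cyc_count p A)(k := cyc_count p A k - 1)"
proof
  fix i
  have "orbit p ` (A - orbit p x) = orbit p ` A - {orbit p x}"
    using bij_betw_orbit_eq_iff[OF x] bij_betw_orbit_subset[OF x] by auto
  then have "{C \<in> orbit p ` (A - orbit p x). card C = i} = {C \<in> orbit p ` A. card C = i} - {orbit p x}"
    by auto
  then show "cyc_count p (A - orbit p x) i = ((cyc_count p A)(k := cyc_count p A k - 1)) i"
    using x fin by (simp add: cyc_count_altdef card_Diff_singleton_if k_def)
qed

lemma cyc_count_card_orbit_pos: "x \<in> A \<Longrightarrow> 0 < cyc_count p A (card (orbit p x))"
  using fin by (auto simp: cyc_count_altdef card_gt_0_iff)

lemma card_points_in_cycles: "card {x \<in> A. card (orbit p x) = k} = k * cyc_count p A k"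
proof -
  let ?S = "{C \<in> orbit p ` A. card C = k}"
  have points: "{x \<in> A. card (orbit p x) = k} = \<Union>?S"
  proof
    show "{x \<in> A. card (orbit p x) = k} \<subseteq> \<Union>?S"
    proof
      fix x assume "x \<in> {x \<in> A. card (orbit p x) = k}"
      then show "x \<in> \<Union>?S"
        using bij_betw_self_in_orbit by (intro UnionI[of "orbit p x"]) auto
    qed
    show "\<Union>?S \<subseteq> {x \<in> A. card (orbit p x) = k}"
    proof
      fix z assume "z \<in> \<Union>?S"
      then obtain x where "x \<in> A" "z \<in> orbit p x" "card (orbit p x) = k"
        by blast
      then show "z \<in> {x \<in> A. card (orbit p x) = k}"
        using bij_betw_orbit_eq[of x z] bij_betw_orbit_subset[of x] by auto
    qed
  qed
  have disj: "pairwise disjnt ?S"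
  proof (rule pairwiseI)
    fix C D assume "C \<in> ?S" "D \<in> ?S" "C \<noteq> D"
    then obtain x y where x: "x \<in> A" "C = orbit p x" and y: "y \<in> A" "D = orbit p y"
      by auto
    have "C = D" if "z \<in> C" "z \<in> D" for z
      using bij_betw_orbit_eq[OF x(1), of z] bij_betw_orbit_eq[OF y(1), of z] x y that by simp
    then show "disjnt C D"
      using \<open>C \<noteq> D\<close> by (auto simp: disjnt_def)
  qed
  have "finite C" if "C \<in> ?S" for C
    using that bij_betw_finite_orbit by auto
  then have "card {x \<in> A. card (orbit p x) = k} = (\<Sum>C\<in>?S. card C)"
    unfolding points by (intro card_Union_disjoint[OF disj]) blast
  also have "\<dots> = k * card ?S"
    by (subst sum.cong[of ?S ?S card "\<lambda>_. k"]) auto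
  finally show ?thesis
    by (simp add: cyc_count_altdef)
qed

end

section \<open>Counting equivariant bijections\<close>

definition equivariant_bijections :: "('a \<Rightarrow> 'a) \<Rightarrow> 'a set \<Rightarrow> ('b \<Rightarrow> 'b) \<Rightarrow> 'b set \<Rightarrow> ('a \<Rightarrow> 'b) set" where
  "equivariant_bijections p A q B =
     {f \<in> A \<rightarrow>\<^sub>E B. bij_betw f A B \<and> (\<forall>x\<in>A. f (p x) = q (f x))}"

lemma equivariant_bijectionsD:
  assumes "f \<in> equivariant_bijections p A q B"
  shows "bij_betw f A B" "f \<in> A \<rightarrow>\<^sub>E B" "\<And>x. x \<in> A \<Longrightarrow> f (p x) = q (f x)"
  using assms by (auto simp: equivariant_bijections_def)

lemma finite_equivariant_bijections:
  "finite A \<Longrightarrow> finite B \<Longrightarrow> finite (equivariant_bijections p A q B)"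
  unfolding equivariant_bijections_def by (rule finite_subset[of _ "A \<rightarrow>\<^sub>E B"]) (auto intro: finite_PiE)

lemma equivariant_funpow:
  assumes "f \<in> equivariant_bijections p A q B" "bij_betw p A A" "x \<in> A"
  shows "f ((p ^^ j) x) = (q ^^ j) (f x)"
proof (induction j)
  case (Suc j)
  have "(p ^^ j) x \<in> A"
    using assms(2,3) by (induction j) (auto dest: bij_betwE)
  then show ?case
    using assms(1) Suc by (simp add: equivariant_bijections_def)
qed simp

lemma equivariant_image_orbit:
  assumes "f \<in> equivariant_bijections p A q B" "bij_betw p A A" "x \<in> A"
  shows "f ` orbit p x = orbit q (f x)"
proof -
  have "f ` orbit p x = {f ((p ^^ n) x) | n. 0 < n}"
    by (auto simp: orbit_altdef)
  also have "\<dots> = orbit q (f x)"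
    by (simp add: orbit_altdef equivariant_funpow[OF assms])
  finally show ?thesis .
qed

lemma funpow_eq_iff_mod_card_orbit:
  assumes "x \<in> orbit p x"
  shows "(p ^^ a) x = (p ^^ b) x \<longleftrightarrow> a mod card (orbit p x) = b mod card (orbit p x)"
proof -
  let ?k = "funpow_dist1 p x x"
  have k: "card (orbit p x) = ?k"
    using orbit_conv_funpow_dist1[OF assms] card_image[OF inj_on_funpow_dist1[OF assms]] by simp
  have "(p ^^ m) x = (p ^^ (m mod ?k)) x" for m
    using funpow_mod_eq[OF funpow_dist1_prop[OF assms]] by simp
  then have "(p ^^ a) x = (p ^^ b) x \<longleftrightarrow> (p ^^ (a mod ?k)) x = (p ^^ (b mod ?k)) x"
    by metis
  also have "\<dots> \<longleftrightarrow> a mod ?k = b mod ?k"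
    using inj_on_funpow_dist1[OF assms] by (auto dest: inj_onD)
  finally show ?thesis
    by (simp only: k)
qed

text \<open>Two cycles of the same length are matched by sending \<open>p\<^sup>j x\<close> to \<open>q\<^sup>j y\<close>.\<close>

lemma equivariant_bijection_between_orbits:
  assumes x: "x \<in> orbit p x" and y: "y \<in> orbit q y" and card: "card (orbit q y) = card (orbit p x)"
  shows "\<exists>h \<in> equivariant_bijections p (orbit p x) q (orbit q y). h x = y"
proof -
  define h where "h = restrict (\<lambda>z. (q ^^ funpow_dist p x z) y) (orbit p x)"
  have h_funpow: "h ((p ^^ j) x) = (q ^^ j) y" for j
  proof -
    let ?d = "funpow_dist p x ((p ^^ j) x)"
    have pj: "(p ^^ j) x \<in> orbit p x"
      using x by (rule funpow_in_orbit)
    then have "(p ^^ ?d) x = (p ^^ j) x"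
      by (rule funpow_dist_prop)
    then have "(q ^^ ?d) y = (q ^^ j) y"
      using funpow_eq_iff_mod_card_orbit[OF x] funpow_eq_iff_mod_card_orbit[OF y] card by simp
    then show ?thesis
      using pj by (simp add: h_def)
  qed
  have orbit_range: "orbit f z = range (\<lambda>j. (f ^^ j) z)" if "z \<in> orbit f z" for f and z :: 'c
    using orbit_altdef_self_in[OF that] by auto
  have image: "h ` orbit p x = orbit q y"
    unfolding orbit_range[OF x] orbit_range[OF y] image_image h_funpow ..
  have "inj_on h (orbit p x)"
    using finite_orbit[OF x] image card by (intro eq_card_imp_inj_on) auto
  then have "bij_betw h (orbit p x) (orbit q y)"
    using image by (simp add: bij_betw_def)
  moreover have "h (p z) = q (h z)" if "z \<in> orbit p x" for z
    using that h_funpow[of "Suc _"] h_funpow unfolding orbit_range[OF x] by auto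
  moreover have "h \<in> orbit p x \<rightarrow>\<^sub>E orbit q y"
    using image by (auto simp: h_def)
  moreover have "h x = y"
    using h_funpow[of 0] by simp
  ultimately show ?thesis
    unfolding equivariant_bijections_def by blast
qed

lemma equivariant_bijections_glue:
  assumes h: "h \<in> equivariant_bijections p C q D" and g: "g \<in> equivariant_bijections p (A - C) q (B - D)"
    and "C \<subseteq> A" "D \<subseteq> B" and "p ` C \<subseteq> C" "p ` (A - C) \<subseteq> A - C"
  shows "(\<lambda>z. if z \<in> C then h z else g z) \<in> equivariant_bijections p A q B"
proof -
  let ?f = "\<lambda>z. if z \<in> C then h z else g z"
  have "bij_betw ?f C D" "bij_betw ?f (A - C) (B - D)"
    using h g unfolding equivariant_bijections_def
    by (auto elim!: bij_betw_cong[THEN iffD1, rotated])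
  then have "bij_betw ?f (C \<union> (A - C)) (D \<union> (B - D))"
    by (rule bij_betw_combine) auto
  then have bij: "bij_betw ?f A B"
    using assms(3,4) by (simp add: Un_absorb1 Un_Diff_cancel)
  moreover have "?f \<in> A \<rightarrow>\<^sub>E B"
  proof -
    have "?f \<in> extensional A"
      using h g assms(3) unfolding equivariant_bijections_def by (auto simp: PiE_def extensional_def)
    then show ?thesis
      using bij_betw_imp_funcset[OF bij] by (simp add: PiE_iff Pi_iff)
  qed
  moreover have "?f (p z) = q (?f z)" if "z \<in> A" for z
    using h g assms(5,6) that unfolding equivariant_bijections_def by (cases "z \<in> C") auto
  ultimately show ?thesis
    unfolding equivariant_bijections_def by blast
qed

lemma card_orbit_equivariant:
  assumes "f \<in> equivariant_bijections p A q B" "finite A" "bij_betw p A A" "x \<in> A"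
  shows "card (orbit q (f x)) = card (orbit p x)"
proof -
  have "inj_on f (orbit p x)"
    using bij_betw_imp_inj_on[OF equivariant_bijectionsD(1)[OF assms(1)]]
      bij_betw_orbit_subset[OF assms(2-4)] by (rule inj_on_subset)
  then have "card (f ` orbit p x) = card (orbit p x)"
    by (rule card_image)
  then show ?thesis
    by (simp only: equivariant_image_orbit[OF assms(1,3,4)])
qed

lemma equivariant_restrict_Diff_orbit:
  assumes f: "f \<in> equivariant_bijections p A q B" and "finite A" "bij_betw p A A" "x \<in> A"
  shows "restrict f (A - orbit p x) \<in> equivariant_bijections p (A - orbit p x) q (B - orbit q (f x))"
proof -
  let ?C = "orbit p x" and ?D = "orbit q (f x)"
  note fb = equivariant_bijectionsD(1)[OF f] and eq = equivariant_bijectionsD(3)[OF f]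
  have CA: "?C \<subseteq> A"
    using bij_betw_orbit_subset[OF assms(2-4)] .
  have image: "f ` ?C = ?D"
    using equivariant_image_orbit[OF f assms(3,4)] .
  have "bij_betw f ?C ?D"
    using bij_betw_subset[OF fb CA image] .
  moreover have "?D \<subseteq> B"
    using image CA bij_betw_imp_surj_on[OF fb] by blast
  ultimately have fD: "bij_betw f (A - ?C) (B - ?D)"
    using fb CA by (intro bij_betw_DiffI)
  then have bij: "bij_betw (restrict f (A - ?C)) (A - ?C) (B - ?D)"
    by (rule bij_betw_cong[THEN iffD1, rotated]) simp
  moreover have "restrict f (A - ?C) \<in> (A - ?C) \<rightarrow>\<^sub>E (B - ?D)"
    using bij_betw_imp_funcset[OF fD] by (simp add: restrict_PiE_iff)
  moreover have "restrict f (A - ?C) (p z) = q (restrict f (A - ?C) z)" if "z \<in> A - ?C" for z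
    using that eq bij_betwE[OF bij_betw_Diff_orbit[OF assms(2-4)]] by auto
  ultimately show ?thesis
    unfolding equivariant_bijections_def by blast
qed

lemma equivariant_bijections_eqI:
  assumes f1: "f1 \<in> equivariant_bijections p A q B" and f2: "f2 \<in> equivariant_bijections p A q B"
    and "bij_betw p A A" "x \<in> A"
    and "f1 x = f2 x" "restrict f1 (A - orbit p x) = restrict f2 (A - orbit p x)"
  shows "f1 = f2"
proof
  fix z
  consider "z \<in> orbit p x" | "z \<in> A - orbit p x" | "z \<notin> A"
    by blast
  then show "f1 z = f2 z"
  proof cases
    case 1
    then obtain n where "z = (p ^^ n) x"
      by (auto simp: orbit_altdef)
    then show ?thesis
      using equivariant_funpow[OF f1 assms(3,4)] equivariant_funpow[OF f2 assms(3,4)] assms(5) by simp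
  next
    case 2
    then show ?thesis
      using fun_cong[OF assms(6), of z] by simp
  next
    case 3
    then show ?thesis
      using PiE_arb[OF equivariant_bijectionsD(2)[OF f1]] PiE_arb[OF equivariant_bijectionsD(2)[OF f2]]
      by simp
  qed
qed

lemma equivariant_bijections_extend:
  assumes fin: "finite A" "finite B" and p: "bij_betw p A A" and q: "bij_betw q B B" and x: "x \<in> A"
    and y: "y \<in> B" "card (orbit q y) = card (orbit p x)"
    and g: "g \<in> equivariant_bijections p (A - orbit p x) q (B - orbit q y)"
  obtains f where "f \<in> equivariant_bijections p A q B" "f x = y" "restrict f (A - orbit p x) = g"
proof -
  let ?C = "orbit p x"
  obtain h where h: "h \<in> equivariant_bijections p ?C q (orbit q y)" "h x = y"
    using equivariant_bijection_between_orbits[OF bij_betw_self_in_orbit[OF fin(1) p x]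
        bij_betw_self_in_orbit[OF fin(2) q y(1)] y(2)] by blast
  define f where "f z = (if z \<in> ?C then h z else g z)" for z
  have "f \<in> equivariant_bijections p A q B"
    unfolding f_def
  proof (rule equivariant_bijections_glue[OF h(1) g])
    show "?C \<subseteq> A" "orbit q y \<subseteq> B"
      using bij_betw_orbit_subset[OF fin(1) p x] bij_betw_orbit_subset[OF fin(2) q y(1)] .
    show "p ` ?C \<subseteq> ?C" "p ` (A - ?C) \<subseteq> A - ?C"
      using bij_betw_on_orbit[OF fin(1) p x] bij_betw_Diff_orbit[OF fin(1) p x]
      by (auto dest: bij_betwE)
  qed
  moreover have "f x = y"
    using h(2) bij_betw_self_in_orbit[OF fin(1) p x] by (simp add: f_def)
  moreover have "restrict f (A - ?C) = g"
    using PiE_arb[OF equivariant_bijectionsD(2)[OF g]] by (auto simp: f_def)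
  ultimately show ?thesis
    by (rule that)
qed

text \<open>An equivariant bijection is determined by the image \<open>y\<close> of one point \<open>x\<close>, which lies
  on a cycle of the same length, together with its restriction to the remaining cycles.\<close>

lemma card_equivariant_bijections_rec:
  assumes fin: "finite A" "finite B" and p: "bij_betw p A A" and q: "bij_betw q B B" and x: "x \<in> A"
  shows "card (equivariant_bijections p A q B) =
    (\<Sum>y \<in> {y \<in> B. card (orbit q y) = card (orbit p x)}.
       card (equivariant_bijections p (A - orbit p x) q (B - orbit q y)))"
proof -
  let ?C = "orbit p x"
  let ?Y = "{y \<in> B. card (orbit q y) = card ?C}"
  let ?S = "SIGMA y:?Y. equivariant_bijections p (A - ?C) q (B - orbit q y)"
  define \<Psi> where "\<Psi> f = (f x, restrict f (A - ?C))" for f :: "'a \<Rightarrow> 'b"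
  have "bij_betw \<Psi> (equivariant_bijections p A q B) ?S"
  proof (rule bij_betw_imageI)
    show "inj_on \<Psi> (equivariant_bijections p A q B)"
      using equivariant_bijections_eqI[OF _ _ p x] by (intro inj_onI) (auto simp: \<Psi>_def)
    show "\<Psi> ` equivariant_bijections p A q B = ?S"
    proof (intro equalityI subsetI)
      fix u assume "u \<in> \<Psi> ` equivariant_bijections p A q B"
      then obtain f where f: "f \<in> equivariant_bijections p A q B" "u = \<Psi> f"
        by blast
      have "f x \<in> B"
        using bij_betwE[OF equivariant_bijectionsD(1)[OF f(1)]] x by blast
      then show "u \<in> ?S"
        using f card_orbit_equivariant[OF f(1) fin(1) p x]
          equivariant_restrict_Diff_orbit[OF f(1) fin(1) p x] by (simp add: \<Psi>_def)
    next
      fix u assume "u \<in> ?S"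
      then obtain y g where u: "u = (y, g)" and y: "y \<in> B" "card (orbit q y) = card ?C"
        and g: "g \<in> equivariant_bijections p (A - ?C) q (B - orbit q y)"
        by blast
      obtain f where "f \<in> equivariant_bijections p A q B" "f x = y" "restrict f (A - ?C) = g"
        using equivariant_bijections_extend[OF fin p q x y g] .
      then show "u \<in> \<Psi> ` equivariant_bijections p A q B"
        unfolding u \<Psi>_def by blast
    qed
  qed
  then have "card (equivariant_bijections p A q B) = card ?S"
    by (rule bij_betw_same_card)
  also have "\<dots> = (\<Sum>y\<in>?Y. card (equivariant_bijections p (A - ?C) q (B - orbit q y)))"
    using fin by (simp add: finite_equivariant_bijections)
  finally show ?thesis .
qed

lemma falling_0 [simp]: "falling m 0 = 1"
  by (simp add: falling_def)

lemma falling_eq_0: "m < r \<Longrightarrow> falling m r = 0"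
  unfolding falling_def by (rule prod_zero) auto

lemma falling_Suc: "falling m (Suc r) = real m * falling (m - 1) r"
proof -
  have "falling m (Suc r) = (real m - 0) * (\<Prod>k<r. real m - real (Suc k))"
    unfolding falling_def by (subst prod.lessThan_Suc_shift) simp
  also have "(\<Prod>k<r. real m - real (Suc k)) = falling (m - 1) r" if "m > 0"
    unfolding falling_def using that by (intro prod.cong) (auto simp: of_nat_diff)
  finally show ?thesis
    by (cases "m = 0") (auto simp: falling_eq_0)
qed

definition cycle_product :: "nat \<Rightarrow> (nat \<Rightarrow> nat) \<Rightarrow> (nat \<Rightarrow> nat) \<Rightarrow> real" where
  "cycle_product N a b = (\<Prod>i\<in>{1..N}. real i ^ a i * falling (b i) (a i))"

lemma cycle_product_remove_cycle:
  assumes k: "k \<in> {1..N}" and "a k = Suc r"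
  shows "cycle_product N a b = real k * real (b k) * cycle_product N (a(k := r)) (b(k := b k - 1))"
proof -
  let ?F = "\<lambda>a b i. real i ^ a i * falling (b i) (a i)"
  have rest: "prod (?F a b) ({1..N} - {k}) = prod (?F (a(k := r)) (b(k := b k - 1))) ({1..N} - {k})"
    by (rule prod.cong) auto
  have "cycle_product N a b = ?F a b k * prod (?F a b) ({1..N} - {k})"
    unfolding cycle_product_def using k by (simp add: prod.remove)
  also have "?F a b k = real k * real (b k) * ?F (a(k := r)) (b(k := b k - 1)) k"
    using assms(2) by (simp add: falling_Suc)
  also have "\<dots> * prod (?F a b) ({1..N} - {k}) =
      real k * real (b k) * cycle_product N (a(k := r)) (b(k := b k - 1))"
    unfolding cycle_product_def rest using k by (simp add: prod.remove)
  finally show ?thesis .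
qed

lemma cycle_product_eq_if:
  "cycle_product N a b =
    (if \<exists>i\<in>{1..N}. a i > b i then 0
     else \<Prod>i\<in>{i\<in>{1..N}. a i > 0}. real i ^ a i * falling (b i) (a i))"
proof (cases "\<exists>i\<in>{1..N}. a i > b i")
  case True
  then obtain i where "i \<in> {1..N}" "b i < a i"
    by blast
  then have "cycle_product N a b = 0"
    unfolding cycle_product_def by (intro prod_zero bexI[of _ i]) (simp_all add: falling_eq_0)
  then show ?thesis
    using True by simp
next
  case False
  have "cycle_product N a b = (\<Prod>i\<in>{i\<in>{1..N}. a i > 0}. real i ^ a i * falling (b i) (a i))"
    unfolding cycle_product_def by (rule prod.mono_neutral_right) auto
  then show ?thesis
    using False by simp
qed

lemma card_equivariant_bijections_step:
  assumes fin: "finite A" "finite B" and p: "bij_betw p A A" and q: "bij_betw q B B" and x: "x \<in> A"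
    and k: "card (orbit p x) = k"
    and rest: "\<And>y. y \<in> B \<Longrightarrow> card (orbit q y) = k \<Longrightarrow>
      real (card (equivariant_bijections p (A - orbit p x) q (B - orbit q y))) = c"
  shows "real (card (equivariant_bijections p A q B)) = real k * real (cyc_count q B k) * c"
proof -
  have "real (card (equivariant_bijections p A q B)) =
      (\<Sum>y | y \<in> B \<and> card (orbit q y) = k.
         real (card (equivariant_bijections p (A - orbit p x) q (B - orbit q y))))"
    using card_equivariant_bijections_rec[OF fin p q x] k by simp
  also have "\<dots> = real (card {y \<in> B. card (orbit q y) = k}) * c"
    using rest by simp
  finally show ?thesis
    unfolding card_points_in_cycles[OF fin(2) q] by simp
qed

lemma card_equivariant_bijections:
  assumes "finite A" "finite B" "bij_betw p A A" "bij_betw q B B" "card A = card B" "card A \<le> N"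
  shows "real (card (equivariant_bijections p A q B)) = cycle_product N (cyc_count p A) (cyc_count q B)"
  using assms
proof (induction "card A" arbitrary: A B rule: less_induct)
  case less
  note fin = less.prems(1,2) and p = less.prems(3) and q = less.prems(4)
  show ?case
  proof (cases "A = {}")
    case True
    then have "B = {}" "equivariant_bijections p A q B = {\<lambda>_. undefined}"
      using less.prems(2,5) by (auto simp: equivariant_bijections_def bij_betw_def)
    then show ?thesis
      using True by (simp add: cycle_product_def cyc_count_def)
  next
    case False
    then obtain x where x: "x \<in> A"
      by blast
    define k where "k = card (orbit p x)"
    define a where "a = cyc_count p A"
    define b where "b = cyc_count q B"
    obtain r where r: "a k = Suc r"
      using cyc_count_card_orbit_pos[OF fin(1) p x] unfolding a_def k_def by (metis gr0_implies_Suc)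
    have k: "k \<in> {1..N}"
      using card_orbit_pos[OF fin(1) p x] card_orbit_le[OF fin(1) p x] less.prems(6)
      unfolding k_def by simp
    have "real (card (equivariant_bijections p A q B)) =
        real k * real (b k) * cycle_product N (a(k := r)) (b(k := b k - 1))"
      unfolding b_def
    proof (rule card_equivariant_bijections_step[OF fin p q x k_def[symmetric]])
      fix y assume y: "y \<in> B" "card (orbit q y) = k"
      have "card (A - orbit p x) < card A" "card (A - orbit p x) = card (B - orbit q y)"
        using card_orbit_pos[OF fin(1) p x] card_orbit_le[OF fin(1) p x]
          card_Diff_orbit[OF fin(1) p x] card_Diff_orbit[OF fin(2) q y(1)] y(2) less.prems(5)
        unfolding k_def by simp_all
      moreover have "cyc_count p (A - orbit p x) = a(k := r)"
        using cyc_count_Diff_orbit[OF fin(1) p x] r unfolding a_def k_def by simp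
      moreover have "cyc_count q (B - orbit q y) = b(k := b k - 1)"
        using cyc_count_Diff_orbit[OF fin(2) q y(1)] y(2) unfolding b_def by simp
      ultimately show "real (card (equivariant_bijections p (A - orbit p x) q (B - orbit q y))) =
          cycle_product N (a(k := r)) ((cyc_count q B)(k := cyc_count q B k - 1))"
        using less.hyps[of "A - orbit p x" "B - orbit q y"] less.prems(6) fin
          bij_betw_Diff_orbit[OF fin(1) p x] bij_betw_Diff_orbit[OF fin(2) q y(1)]
        unfolding b_def by simp
    qed
    also have "\<dots> = cycle_product N a b"
      using cycle_product_remove_cycle[of k N a r b] k r by simp
    finally show ?thesis
      unfolding a_def b_def .
  qed
qed

section \<open>Burnside's lemma for a group of permutations\<close>

definition perm_monoid :: "('a \<Rightarrow> 'a) set \<Rightarrow> ('a \<Rightarrow> 'a) monoid" where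
  "perm_monoid G = \<lparr>carrier = G, mult = (\<circ>), one = id\<rparr>"

context
  fixes G :: "('a \<Rightarrow> 'a) set"
  assumes nonempty: "G \<noteq> {}"
    and comp: "\<And>g h. g \<in> G \<Longrightarrow> h \<in> G \<Longrightarrow> g \<circ> h \<in> G"
    and inv: "\<And>g. g \<in> G \<Longrightarrow> Hilbert_Choice.inv g \<in> G"
    and bij: "\<And>g. g \<in> G \<Longrightarrow> bij g"
begin

lemma perm_group_inv_comp:
  "g \<in> G \<Longrightarrow> Hilbert_Choice.inv g \<circ> g = id" "g \<in> G \<Longrightarrow> g \<circ> Hilbert_Choice.inv g = id"
  using bij by (simp_all add: bij_is_inj bij_is_surj surj_iff[symmetric])

lemma group_perm_monoid: "group (perm_monoid G)"
proof (rule groupI)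
  obtain g0 where g0: "g0 \<in> G"
    using nonempty by blast
  then have "id \<in> G"
    using comp[OF g0 inv[OF g0]] perm_group_inv_comp(2)[OF g0] by simp
  then show "\<one>\<^bsub>perm_monoid G\<^esub> \<in> carrier (perm_monoid G)"
    by (simp add: perm_monoid_def)
  show "x \<otimes>\<^bsub>perm_monoid G\<^esub> y \<in> carrier (perm_monoid G)"
    if "x \<in> carrier (perm_monoid G)" "y \<in> carrier (perm_monoid G)" for x y
    using that comp by (simp add: perm_monoid_def)
  show "x \<otimes>\<^bsub>perm_monoid G\<^esub> y \<otimes>\<^bsub>perm_monoid G\<^esub> z = x \<otimes>\<^bsub>perm_monoid G\<^esub> (y \<otimes>\<^bsub>perm_monoid G\<^esub> z)" for x y z
    by (simp add: perm_monoid_def o_assoc)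
  show "\<one>\<^bsub>perm_monoid G\<^esub> \<otimes>\<^bsub>perm_monoid G\<^esub> x = x" for x
    by (simp add: perm_monoid_def)
  show "\<exists>y\<in>carrier (perm_monoid G). y \<otimes>\<^bsub>perm_monoid G\<^esub> x = \<one>\<^bsub>perm_monoid G\<^esub>"
    if "x \<in> carrier (perm_monoid G)" for x
    using that inv perm_group_inv_comp(1) by (auto simp: perm_monoid_def)
qed

context
  fixes X :: "'b set" and act :: "('a \<Rightarrow> 'a) \<Rightarrow> 'b \<Rightarrow> 'b"
  assumes act_id: "\<And>x. x \<in> X \<Longrightarrow> act id x = x"
    and act_comp: "\<And>g h x. g \<in> G \<Longrightarrow> h \<in> G \<Longrightarrow> x \<in> X \<Longrightarrow> act (g \<circ> h) x = act g (act h x)"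
    and act_closed: "\<And>g x. g \<in> G \<Longrightarrow> x \<in> X \<Longrightarrow> act g x \<in> X"
begin

lemma restrict_act_Bij: "g \<in> G \<Longrightarrow> restrict (act g) X \<in> Bij X"
proof -
  assume g: "g \<in> G"
  let ?g' = "Hilbert_Choice.inv g"
  have "act ?g' (act g x) = x" "act g (act ?g' x) = x" if "x \<in> X" for x
    using act_comp[OF inv[OF g] g that] act_comp[OF g inv[OF g] that] perm_group_inv_comp[OF g] act_id[OF that]
    by simp_all
  then have "bij_betw (act g) X X"
    using act_closed[OF g] act_closed[OF inv[OF g]]
    by (intro bij_betw_byWitness[where f' = "act ?g'"]) auto
  then have "bij_betw (restrict (act g) X) X X"
    by (rule bij_betw_cong[THEN iffD1, rotated]) simp
  then show ?thesis
    by (simp add: Bij_def)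
qed

lemma group_action_perm_monoid: "group_action (perm_monoid G) X (\<lambda>g. restrict (act g) X)"
proof -
  have "(\<lambda>g. restrict (act g) X) \<in> hom (perm_monoid G) (BijGroup X)"
  proof (rule homI)
    show "restrict (act g) X \<in> carrier (BijGroup X)" if "g \<in> carrier (perm_monoid G)" for g
      using that restrict_act_Bij by (simp add: perm_monoid_def BijGroup_def)
  next
    fix g h assume "g \<in> carrier (perm_monoid G)" "h \<in> carrier (perm_monoid G)"
    then have gh: "g \<in> G" "h \<in> G"
      by (simp_all add: perm_monoid_def)
    have "restrict (act (g \<circ> h)) X = compose X (restrict (act g) X) (restrict (act h) X)"
    proof
      fix x show "restrict (act (g \<circ> h)) X x = compose X (restrict (act g) X) (restrict (act h) X) x"
        using act_comp[OF gh] act_closed[OF gh(2)] by (cases "x \<in> X") (simp_all add: compose_def)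
    qed
    then show "restrict (act (g \<otimes>\<^bsub>perm_monoid G\<^esub> h)) X =
        restrict (act g) X \<otimes>\<^bsub>BijGroup X\<^esub> restrict (act h) X"
      using restrict_act_Bij gh by (simp add: perm_monoid_def BijGroup_def)
  qed
  then show ?thesis
    unfolding group_action_def group_hom_def group_hom_axioms_def
    using group_perm_monoid group_BijGroup by blast
qed

lemma burnside_permutation_group:
  assumes "finite G" "finite X"
  shows "card (X // {(x, y). x \<in> X \<and> y \<in> X \<and> (\<exists>g\<in>G. act g x = y)}) * card G =
    (\<Sum>g\<in>G. card {x \<in> X. act g x = x})"
proof -
  let ?M = "perm_monoid G" and ?\<phi> = "\<lambda>g. restrict (act g) X"
  have "card (orbits ?M X ?\<phi>) * order ?M = (\<Sum>g\<in>carrier ?M. card (invariants X ?\<phi> g))"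
    using group_action_perm_monoid assms by (intro group_action.burnside) (auto simp: perm_monoid_def)
  moreover have "orbits ?M X ?\<phi> = X // {(x, y). x \<in> X \<and> y \<in> X \<and> (\<exists>g\<in>G. act g x = y)}"
    using act_closed by (auto simp: orbits_def Group_Action.orbit_def quotient_def perm_monoid_def)
  moreover have "invariants X ?\<phi> g = {x \<in> X. act g x = x}" for g
    by (auto simp: invariants_def)
  ultimately show ?thesis
    by (simp add: order_def perm_monoid_def)
qed

end

end

section \<open>Chord diagrams\<close>

lemma chord_diagram_iff_partition_on:
  "chord_diagram n M \<longleftrightarrow> partition_on {1..2*n} M \<and> (\<forall>e\<in>M. card e = 2)"
proof
  assume M: "chord_diagram n M"
  then have sub: "\<And>e. e \<in> M \<Longrightarrow> e \<subseteq> {1..2*n}" and two: "\<forall>e\<in>M. card e = 2"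
    and cover: "\<And>x. x \<in> {1..2*n} \<Longrightarrow> \<exists>!e. e \<in> M \<and> x \<in> e"
    unfolding chord_diagram_def by auto
  have "\<Union>M = {1..2*n}"
    using sub cover by blast
  moreover have "disjoint M"
    unfolding pairwise_def disjnt_def using sub cover by blast
  moreover have "{} \<notin> M"
    using two by force
  ultimately show "partition_on {1..2*n} M \<and> (\<forall>e\<in>M. card e = 2)"
    using two by (simp add: partition_on_def)
next
  assume "partition_on {1..2*n} M \<and> (\<forall>e\<in>M. card e = 2)"
  then have union: "\<Union>M = {1..2*n}" and disj: "disjoint M" and two: "\<forall>e\<in>M. card e = 2"
    by (auto simp: partition_on_def)
  have "\<exists>!e. e \<in> M \<and> x \<in> e" if "x \<in> {1..2*n}" for x
    using that union disj unfolding pairwise_def disjnt_def by blast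
  then show "chord_diagram n M"
    unfolding chord_diagram_def using union two by blast
qed

lemma finite_card_chord_diagram:
  assumes "chord_diagram n M"
  shows "finite M" "card M = n"
proof -
  have part: "partition_on {1..2*n} M" and two: "\<forall>e\<in>M. card e = 2"
    using assms by (simp_all add: chord_diagram_iff_partition_on)
  show "finite M"
    using finite_elements[OF _ part] by simp
  have "finite e" if "e \<in> M" for e
    using two that by (intro card_ge_0_finite) simp
  then have "card {1..2*n} = (\<Sum>e\<in>M. card e)"
    using part by (intro product_partition)
  then show "card M = n"
    using two by simp
qed

lemma Union_chord_diagram: "chord_diagram n M \<Longrightarrow> \<Union>M = {1..2*n}"
  by (simp add: chord_diagram_iff_partition_on partition_on_def)

lemma finite_chord_diagrams: "finite {M. chord_diagram n M}"
  by (rule finite_subset[of _ "Pow (Pow {1..2*n})"]) (auto simp: chord_diagram_def)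

lemma chord_diagram_image:
  assumes g: "g permutes {1..2*n}" and M: "chord_diagram n M"
  shows "chord_diagram n ((\<lambda>e. g ` e) ` M)"
proof -
  have inj: "inj_on g {1..2*n}"
    using permutes_inj[OF g] by (rule inj_on_subset) simp
  have part: "partition_on {1..2*n} M" and two: "\<forall>e\<in>M. card e = 2"
    using M by (simp_all add: chord_diagram_iff_partition_on)
  have "partition_on (g ` {1..2*n}) ((\<lambda>e. g ` e) ` M - {{}})"
    using part inj by (rule partition_on_inj_image)
  moreover have "{} \<notin> (\<lambda>e. g ` e) ` M"
    using partition_onD3[OF part] by (simp add: image_iff)
  moreover have "card (g ` e) = 2" if "e \<in> M" for e
  proof -
    have "e \<subseteq> {1..2*n}"
      unfolding partition_onD1[OF part] using that by (rule Union_upper)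
    then show ?thesis
      using card_image[OF inj_on_subset[OF inj]] bspec[OF two that] by simp
  qed
  ultimately show ?thesis
    unfolding chord_diagram_iff_partition_on permutes_image[OF g] by simp
qed

lemma card_diagram_classes_burnside:
  assumes "circuit_perm_group n G"
  shows "card ({M. chord_diagram n M} // diagram_equiv n G) * card G =
    (\<Sum>g\<in>G. card {M. chord_diagram n M \<and> (\<lambda>e. g ` e) ` M = M})"
proof -
  have perm: "\<And>g. g \<in> G \<Longrightarrow> g permutes {1..2*n}"
    using assms unfolding circuit_perm_group_def by blast
  have "card ({M. chord_diagram n M} // {(x, y). x \<in> {M. chord_diagram n M} \<and> y \<in> {M. chord_diagram n M} \<and>
      (\<exists>g\<in>G. (\<lambda>e. g ` e) ` x = y)}) * card G =
    (\<Sum>g\<in>G. card {x \<in> {M. chord_diagram n M}. (\<lambda>e. g ` e) ` x = x})"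
  proof (rule burnside_permutation_group)
    show "G \<noteq> {}" "finite G" "\<And>g h. g \<in> G \<Longrightarrow> h \<in> G \<Longrightarrow> g \<circ> h \<in> G"
      "\<And>g. g \<in> G \<Longrightarrow> Hilbert_Choice.inv g \<in> G"
      using assms unfolding circuit_perm_group_def by blast+
    show "\<And>g. g \<in> G \<Longrightarrow> bij g"
      using perm permutes_bij by blast
    show "finite {M. chord_diagram n M}"
      by (rule finite_chord_diagrams)
    show "\<And>g x. g \<in> G \<Longrightarrow> x \<in> {M. chord_diagram n M} \<Longrightarrow> (\<lambda>e. g ` e) ` x \<in> {M. chord_diagram n M}"
      using chord_diagram_image perm by blast
  qed (simp_all add: image_comp)
  then show ?thesis
    by (simp add: diagram_equiv_def)
qed

section \<open>The wreath product as stabiliser of the pairing of chord ends\<close>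

abbreviation ends :: "nat \<Rightarrow> (nat \<times> nat) set" where
  "ends n \<equiv> {1..n} \<times> {1..2}"

definition end_pairs :: "nat \<Rightarrow> (nat \<times> nat) set set" where
  "end_pairs n = (\<lambda>i. {i} \<times> {1..2}) ` {1..n}"

lemma partition_on_end_pairs: "partition_on (ends n) (end_pairs n)"
proof (rule partition_onI)
  show "\<Union>(end_pairs n) = ends n"
    unfolding end_pairs_def by blast
  show "disjnt S T" if "S \<in> end_pairs n" "T \<in> end_pairs n" "S \<noteq> T" for S T
    using that unfolding end_pairs_def disjnt_def by blast
  show "{} \<notin> end_pairs n"
    unfolding end_pairs_def by force
qed

lemma end_pairs_subset: "S \<in> end_pairs n \<Longrightarrow> S \<subseteq> ends n"
  unfolding end_pairs_def by blast

lemma wreathE: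
  assumes "\<pi> \<in> wreath n"
  obtains \<tau> \<sigma> where "\<tau> permutes {1..n}" "\<And>i. i \<in> {1..n} \<Longrightarrow> \<sigma> i permutes {1..2}"
    "\<And>i j. i \<in> {1..n} \<Longrightarrow> j \<in> {1..2} \<Longrightarrow> \<pi> (i, j) = (\<tau> i, \<sigma> i j)"
    "\<And>x. x \<notin> ends n \<Longrightarrow> \<pi> x = x"
proof -
  obtain \<tau> \<sigma> where "\<tau> permutes {1..n}" "\<forall>i\<in>{1..n}. \<sigma> i permutes {1..2}"
    and \<pi>: "\<pi> = (\<lambda>(i, j). if (i, j) \<in> ends n then (\<tau> i, \<sigma> i j) else (i, j))"
    using assms unfolding wreath_def by blast
  then show ?thesis
    by (intro that[of \<tau> \<sigma>]) (auto split: if_splits)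
qed

lemma wreath_permutes_ends:
  assumes "\<pi> \<in> wreath n"
  shows "\<pi> permutes ends n"
proof -
  obtain \<tau> \<sigma> where \<tau>: "\<tau> permutes {1..n}" and \<sigma>: "\<And>i. i \<in> {1..n} \<Longrightarrow> \<sigma> i permutes {1..2}"
    and \<pi>: "\<And>i j. i \<in> {1..n} \<Longrightarrow> j \<in> {1..2} \<Longrightarrow> \<pi> (i, j) = (\<tau> i, \<sigma> i j)"
    and outside: "\<And>x. x \<notin> ends n \<Longrightarrow> \<pi> x = x"
    by (rule wreathE[OF assms]) (rule that)
  show ?thesis
  proof (rule inj_imp_permutes)
    show "inj_on \<pi> (ends n)"
    proof (rule inj_onI)
      fix x y assume x: "x \<in> ends n" and y: "y \<in> ends n" and eq: "\<pi> x = \<pi> y"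
      obtain i j i' j' where xy: "x = (i, j)" "y = (i', j')"
        by fastforce
      have ij: "i \<in> {1..n}" "j \<in> {1..2}" "i' \<in> {1..n}" "j' \<in> {1..2}"
        using x y unfolding xy by auto
      have "(\<tau> i, \<sigma> i j) = (\<tau> i', \<sigma> i' j')"
        using eq unfolding xy \<pi>[OF ij(1,2)] \<pi>[OF ij(3,4)] .
      then have "i = i'"
        using permutes_inj[OF \<tau>] by (simp add: inj_eq)
      moreover have "j = j'"
        using \<open>(\<tau> i, \<sigma> i j) = (\<tau> i', \<sigma> i' j')\<close> permutes_inj[OF \<sigma>[OF ij(1)]]
        unfolding \<open>i = i'\<close> by (simp add: inj_eq)
      ultimately show "x = y"
        unfolding xy by simp
    qed
    show "\<pi> x \<in> ends n" if x: "x \<in> ends n" for x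
    proof -
      obtain i j where ij: "x = (i, j)" "i \<in> {1..n}" "j \<in> {1..2}"
        using x by blast
      then show ?thesis
        using \<pi> permutes_in_image[OF \<tau>, of i] permutes_in_image[OF \<sigma>[of i], of j] by simp
    qed
  qed (use outside in simp_all)
qed

lemma wreath_image_end_pairs:
  assumes "\<pi> \<in> wreath n"
  shows "(\<lambda>S. \<pi> ` S) ` end_pairs n = end_pairs n"
proof -
  obtain \<tau> \<sigma> where \<tau>: "\<tau> permutes {1..n}" and \<sigma>: "\<And>i. i \<in> {1..n} \<Longrightarrow> \<sigma> i permutes {1..2}"
    and \<pi>: "\<And>i j. i \<in> {1..n} \<Longrightarrow> j \<in> {1..2} \<Longrightarrow> \<pi> (i, j) = (\<tau> i, \<sigma> i j)"
    by (rule wreathE[OF assms]) (rule that)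
  have "\<pi> ` ({i} \<times> {1..2}) = {\<tau> i} \<times> {1..2}" if "i \<in> {1..n}" for i
  proof -
    have "\<pi> ` ({i} \<times> {1..2}) = Pair (\<tau> i) ` \<sigma> i ` {1..2}"
      using that \<pi> by (force simp: image_iff)
    then show ?thesis
      using permutes_image[OF \<sigma>[OF that]] by auto
  qed
  then have "(\<lambda>S. \<pi> ` S) ` end_pairs n = (\<lambda>i. {i} \<times> {1..2}) ` \<tau> ` {1..n}"
    unfolding end_pairs_def image_image by (rule image_cong[OF refl])
  then show ?thesis
    unfolding permutes_image[OF \<tau>] by (simp only: end_pairs_def)
qed

lemma stable_end_pairsE:
  assumes perm: "\<pi> permutes ends n" and pairs: "(\<lambda>S. \<pi> ` S) ` end_pairs n \<subseteq> end_pairs n"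
  obtains \<tau> where "\<tau> permutes {1..n}" "\<And>i. i \<in> {1..n} \<Longrightarrow> \<pi> ` ({i} \<times> {1..2}) = {\<tau> i} \<times> {1..2}"
proof -
  define \<tau> where "\<tau> i = (if i \<in> {1..n} then fst (\<pi> (i, 1)) else i)" for i
  have pair: "\<pi> ` ({i} \<times> {1..2}) = {\<tau> i} \<times> {1..2}" "\<tau> i \<in> {1..n}" if i: "i \<in> {1..n}" for i
  proof -
    have "{i} \<times> {1..2} \<in> end_pairs n"
      unfolding end_pairs_def using i by (rule imageI)
    then have "\<pi> ` ({i} \<times> {1..2}) \<in> end_pairs n"
      using pairs by blast
    then obtain i' where i': "i' \<in> {1..n}" "\<pi> ` ({i} \<times> {1..2}) = {i'} \<times> {1..2}"
      unfolding end_pairs_def by (rule imageE) (rule that)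
    have "\<pi> (i, 1) \<in> \<pi> ` ({i} \<times> {1..2})"
      by (rule imageI) simp
    then have "\<pi> (i, 1) \<in> {i'} \<times> {1..2}"
      unfolding i'(2) .
    then have "\<tau> i = i'"
      using i by (auto simp: \<tau>_def)
    then show "\<pi> ` ({i} \<times> {1..2}) = {\<tau> i} \<times> {1..2}" "\<tau> i \<in> {1..n}"
      using i' by simp_all
  qed
  have "\<tau> permutes {1..n}"
  proof (rule inj_imp_permutes)
    show "inj_on \<tau> {1..n}"
    proof
      fix i i' assume "i \<in> {1..n}" "i' \<in> {1..n}" "\<tau> i = \<tau> i'"
      then have "\<pi> ` ({i} \<times> {1..2}) = \<pi> ` ({i'} \<times> {1..2})"
        using pair(1) by simp
      then have "{i} \<times> {1..2::nat} = {i'} \<times> {1..2}"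
        using permutes_inj[OF perm] by (simp add: inj_image_eq_iff)
      then show "i = i'"
        by (simp add: times_eq_iff)
    qed
    show "\<tau> i \<in> {1..n}" if "i \<in> {1..n}" for i
      using pair(2)[OF that] .
    show "\<tau> i = i" if "i \<notin> {1..n}" for i
      using that by (auto simp: \<tau>_def)
  qed simp
  then show ?thesis
    using pair(1) by (rule that)
qed

lemma wreathI:
  assumes perm: "\<pi> permutes ends n" and pairs: "(\<lambda>S. \<pi> ` S) ` end_pairs n \<subseteq> end_pairs n"
  shows "\<pi> \<in> wreath n"
proof -
  obtain \<tau> where \<tau>: "\<tau> permutes {1..n}" and pair: "\<And>i. i \<in> {1..n} \<Longrightarrow> \<pi> ` ({i} \<times> {1..2}) = {\<tau> i} \<times> {1..2}"
    using stable_end_pairsE[OF perm pairs] by blast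
  define \<sigma> where "\<sigma> i j = (if j \<in> {1..2} then snd (\<pi> (i, j)) else j)" for i j :: nat
  have \<pi>: "\<pi> (i, j) = (\<tau> i, \<sigma> i j)" "\<sigma> i j \<in> {1..2}" if "i \<in> {1..n}" "j \<in> {1..2}" for i j
  proof -
    have "\<pi> (i, j) \<in> {\<tau> i} \<times> {1..2}"
      using pair[OF that(1)] that(2) by blast
    then show "\<pi> (i, j) = (\<tau> i, \<sigma> i j)" "\<sigma> i j \<in> {1..2}"
      using that(2) by (cases "\<pi> (i, j)", simp add: \<sigma>_def)+
  qed
  have "\<sigma> i permutes {1..2}" if i: "i \<in> {1..n}" for i
  proof (rule inj_imp_permutes)
    show "inj_on (\<sigma> i) {1..2}"
    proof
      fix j j' assume "j \<in> {1..2}" "j' \<in> {1..2}" "\<sigma> i j = \<sigma> i j'"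
      then have "\<pi> (i, j) = \<pi> (i, j')"
        using \<pi>(1)[OF i] by simp
      then show "j = j'"
        by (simp add: inj_eq[OF permutes_inj[OF perm]])
    qed
    show "\<sigma> i j \<in> {1..2}" if "j \<in> {1..2}" for j
      using \<pi>(2)[OF i that] .
    show "\<sigma> i j = j" if "j \<notin> {1..2}" for j
      using that by (auto simp: \<sigma>_def)
  qed simp
  moreover have "\<pi> = (\<lambda>(i, j). if (i, j) \<in> ends n then (\<tau> i, \<sigma> i j) else (i, j))"
  proof
    fix x :: "nat \<times> nat"
    obtain i j where x: "x = (i, j)"
      by fastforce
    show "\<pi> x = (\<lambda>(i, j). if (i, j) \<in> ends n then (\<tau> i, \<sigma> i j) else (i, j)) x"
      using \<pi>(1)[of i j] permutes_not_in[OF perm, of x] unfolding x by (cases "(i, j) \<in> ends n") simp_all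
  qed
  ultimately show ?thesis
    using \<tau> unfolding wreath_def by blast
qed

lemma wreath_eqI:
  assumes "\<pi>1 \<in> wreath n" "\<pi>2 \<in> wreath n" "inj_on f (ends n)" "\<And>x. x \<in> ends n \<Longrightarrow> f (\<pi>1 x) = f (\<pi>2 x)"
  shows "\<pi>1 = \<pi>2"
proof
  fix x :: "nat \<times> nat"
  have perm: "\<pi>1 permutes ends n" "\<pi>2 permutes ends n"
    using wreath_permutes_ends[OF assms(1)] wreath_permutes_ends[OF assms(2)] .
  show "\<pi>1 x = \<pi>2 x"
  proof (cases "x \<in> ends n")
    case True
    then show ?thesis
      using inj_onD[OF assms(3) assms(4)[OF True]] permutes_in_image[OF perm(1)] permutes_in_image[OF perm(2)]
      by blast
  next
    case False
    then show ?thesis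
      using permutes_not_in[OF perm(1)] permutes_not_in[OF perm(2)] by simp
  qed
qed

lemma finite_wreath: "finite (wreath n)"
proof (rule finite_subset)
  show "wreath n \<subseteq> {\<pi>. \<pi> permutes ends n}"
    using wreath_permutes_ends by blast
  show "finite {\<pi>. \<pi> permutes ends n}"
    by (rule finite_permutations) simp
qed

lemma id_in_wreath: "id \<in> wreath n"
  by (rule wreathI) (auto simp: end_pairs_def)

section \<open>Chord diagrams as labellings modulo the wreath product\<close>

definition labellings :: "nat \<Rightarrow> (nat \<times> nat \<Rightarrow> nat) set" where
  "labellings n = {f \<in> ends n \<rightarrow>\<^sub>E {1..2*n}. bij_betw f (ends n) {1..2*n}}"

definition diagram_of :: "nat \<Rightarrow> (nat \<times> nat \<Rightarrow> nat) \<Rightarrow> nat set set" where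
  "diagram_of n f = (\<lambda>S. f ` S) ` end_pairs n"

lemma labellings_bij_betw: "f \<in> labellings n \<Longrightarrow> bij_betw f (ends n) {1..2*n}"
  by (simp add: labellings_def)

lemma labellingsI: "bij_betw f (ends n) {1..2*n} \<Longrightarrow> f \<in> extensional (ends n) \<Longrightarrow> f \<in> labellings n"
  using bij_betw_imp_funcset by (fastforce simp: labellings_def PiE_iff)

lemma finite_labellings: "finite (labellings n)"
  unfolding labellings_def by (rule finite_subset[of _ "ends n \<rightarrow>\<^sub>E {1..2*n}"]) (auto intro: finite_PiE)

lemma diagram_of_chord_diagram:
  assumes "f \<in> labellings n"
  shows "chord_diagram n (diagram_of n f)"
proof -
  have bij: "bij_betw f (ends n) {1..2*n}"
    using assms by (rule labellings_bij_betw)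
  then have inj: "inj_on f (ends n)"
    by (rule bij_betw_imp_inj_on)
  have "partition_on (f ` ends n) ((\<lambda>S. f ` S) ` end_pairs n - {{}})"
    using partition_on_end_pairs inj by (rule partition_on_inj_image)
  moreover have "{} \<notin> diagram_of n f"
    using partition_onD3[OF partition_on_end_pairs] by (simp add: diagram_of_def image_iff)
  moreover have "card (f ` S) = 2" if S: "S \<in> end_pairs n" for S
  proof -
    obtain i where "S = {i} \<times> {1..2}"
      using S unfolding end_pairs_def by blast
    then show ?thesis
      using card_image[OF inj_on_subset[OF inj end_pairs_subset[OF S]]] by simp
  qed
  ultimately show ?thesis
    unfolding chord_diagram_iff_partition_on bij_betw_imp_surj_on[OF bij] diagram_of_def by simp
qed

lemma chord_diagram_labelling:
  assumes M: "chord_diagram n M"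
  shows "\<exists>f\<in>labellings n. diagram_of n f = M"
proof -
  obtain h where h: "bij_betw h {1..n} M"
    using finite_same_card_bij[of "{1..n}" M] finite_card_chord_diagram[OF M] by auto
  define f where "f = restrict (\<lambda>(i, j). if j = 1 then Min (h i) else Max (h i)) (ends n)"
  have hM: "h i \<in> M" if "i \<in> {1..n}" for i
    using bij_betwE[OF h] that by blast
  have pair_image: "f ` ({i} \<times> {1..2}) = h i" if i: "i \<in> {1..n}" for i
  proof -
    obtain a b where ab: "h i = {a, b}" "a \<noteq> b"
      using hM[OF i] M unfolding chord_diagram_def by (meson card_2_iff)
    have "{i} \<times> {1..2::nat} = {(i, 1), (i, 2)}"
      by auto
    then have "f ` ({i} \<times> {1..2}) = {Min (h i), Max (h i)}"
      using i by (simp add: f_def)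
    also have "\<dots> = h i"
      unfolding ab using ab(2) by (cases "a < b") auto
    finally show ?thesis .
  qed
  have diagram: "diagram_of n f = M"
  proof -
    have "diagram_of n f = h ` {1..n}"
      unfolding diagram_of_def end_pairs_def image_image using pair_image by (rule image_cong[OF refl])
    then show ?thesis
      using bij_betw_imp_surj_on[OF h] by simp
  qed
  have "f ` ends n = (\<Union>i\<in>{1..n}. f ` ({i} \<times> {1..2}))"
    by blast
  also have "\<dots> = \<Union>M"
    using pair_image bij_betw_imp_surj_on[OF h] by simp
  finally have image: "f ` ends n = {1..2*n}"
    unfolding Union_chord_diagram[OF M] .
  then have "inj_on f (ends n)"
    by (intro eq_card_imp_inj_on) (simp_all add: card_cartesian_product)
  then have "f \<in> labellings n"
    using image by (intro labellingsI) (simp_all add: bij_betw_def f_def)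
  with diagram show ?thesis
    by blast
qed

lemma diagram_of_cong:
  assumes "\<And>x. x \<in> ends n \<Longrightarrow> f x = f' x"
  shows "diagram_of n f = diagram_of n f'"
  unfolding diagram_of_def
proof (rule image_cong[OF refl])
  fix S assume "S \<in> end_pairs n"
  then show "f ` S = f' ` S"
    using assms subsetD[OF end_pairs_subset] by (intro image_cong) blast+
qed

lemma diagram_of_comp: "diagram_of n (g \<circ> f) = (\<lambda>e. g ` e) ` diagram_of n f"
  unfolding diagram_of_def by (simp add: image_image image_comp)

lemma diagram_of_comp_wreath:
  assumes "\<pi> \<in> wreath n"
  shows "diagram_of n (f \<circ> \<pi>) = diagram_of n f"
proof -
  have "diagram_of n (f \<circ> \<pi>) = (\<lambda>S. f ` S) ` (\<lambda>S. \<pi> ` S) ` end_pairs n"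
    unfolding diagram_of_def by (simp add: image_image image_comp)
  also have "\<dots> = diagram_of n f"
    unfolding wreath_image_end_pairs[OF assms] diagram_of_def ..
  finally show ?thesis .
qed

lemma labelling_comp_wreath:
  assumes "f \<in> labellings n" "\<pi> \<in> wreath n"
  shows "restrict (f \<circ> \<pi>) (ends n) \<in> labellings n"
proof (rule labellingsI)
  have "bij_betw (f \<circ> \<pi>) (ends n) {1..2*n}"
    using permutes_imp_bij[OF wreath_permutes_ends[OF assms(2)]] labellings_bij_betw[OF assms(1)]
    by (rule bij_betw_trans)
  then show "bij_betw (restrict (f \<circ> \<pi>) (ends n)) (ends n) {1..2*n}"
    by (rule bij_betw_cong[THEN iffD1, rotated]) simp
qed simp

lemma labelling_comp_permutes:
  assumes "f \<in> labellings n" "g permutes {1..2*n}"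
  shows "restrict (g \<circ> f) (ends n) \<in> labellings n"
proof (rule labellingsI)
  have "bij_betw (g \<circ> f) (ends n) {1..2*n}"
    using labellings_bij_betw[OF assms(1)] permutes_imp_bij[OF assms(2)] by (rule bij_betw_trans)
  then show "bij_betw (restrict (g \<circ> f) (ends n)) (ends n) {1..2*n}"
    by (rule bij_betw_cong[THEN iffD1, rotated]) simp
qed simp

lemma diagram_of_eq_imp_wreath:
  assumes f1: "f1 \<in> labellings n" and f2: "f2 \<in> labellings n" and eq: "diagram_of n f1 = diagram_of n f2"
  shows "\<exists>\<pi>\<in>wreath n. \<forall>x\<in>ends n. f2 x = f1 (\<pi> x)"
proof -
  have b1: "bij_betw f1 (ends n) {1..2*n}" and b2: "bij_betw f2 (ends n) {1..2*n}"
    using labellings_bij_betw[OF f1] labellings_bij_betw[OF f2] .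
  define \<pi> where "\<pi> x = (if x \<in> ends n then inv_into (ends n) f1 (f2 x) else x)" for x
  have "bij_betw (inv_into (ends n) f1 \<circ> f2) (ends n) (ends n)"
    using b2 bij_betw_inv_into[OF b1] by (rule bij_betw_trans)
  then have "bij_betw \<pi> (ends n) (ends n)"
    by (rule bij_betw_cong[THEN iffD1, rotated]) (simp add: \<pi>_def)
  then have perm: "\<pi> permutes ends n"
    by (rule bij_imp_permutes) (simp add: \<pi>_def)
  have "(\<lambda>S. \<pi> ` S) ` end_pairs n \<subseteq> end_pairs n"
  proof
    fix T assume "T \<in> (\<lambda>S. \<pi> ` S) ` end_pairs n"
    then obtain S where S: "S \<in> end_pairs n" "T = \<pi> ` S"
      by blast
    have "f2 ` S \<in> diagram_of n f2"
      unfolding diagram_of_def using S(1) by (rule imageI)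
    then have "f2 ` S \<in> diagram_of n f1"
      unfolding eq .
    then obtain S' where S': "S' \<in> end_pairs n" "f2 ` S = f1 ` S'"
      unfolding diagram_of_def by blast
    have "T = inv_into (ends n) f1 ` f2 ` S"
      unfolding S(2) image_image using end_pairs_subset[OF S(1)] by (intro image_cong) (auto simp: \<pi>_def)
    also have "\<dots> = S'"
      unfolding S'(2) using bij_betw_imp_inj_on[OF b1] end_pairs_subset[OF S'(1)] by (rule inv_into_image_cancel)
    finally show "T \<in> end_pairs n"
      using S'(1) by simp
  qed
  with perm have "\<pi> \<in> wreath n"
    by (rule wreathI)
  moreover have "f2 x = f1 (\<pi> x)" if "x \<in> ends n" for x
  proof -
    have "f2 x \<in> f1 ` ends n"
      unfolding bij_betw_imp_surj_on[OF b1] using bij_betwE[OF b2] that by blast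
    then show ?thesis
      using that by (simp add: \<pi>_def f_inv_into_f)
  qed
  ultimately show ?thesis
    by blast
qed

lemma inj_on_restrict_comp_wreath:
  assumes "f \<in> labellings n"
  shows "inj_on (\<lambda>\<pi>. restrict (f \<circ> \<pi>) (ends n)) (wreath n)"
proof (rule inj_onI)
  fix \<pi>1 \<pi>2 assume \<pi>: "\<pi>1 \<in> wreath n" "\<pi>2 \<in> wreath n"
    and eq: "restrict (f \<circ> \<pi>1) (ends n) = restrict (f \<circ> \<pi>2) (ends n)"
  show "\<pi>1 = \<pi>2"
  proof (rule wreath_eqI[OF \<pi>])
    show "inj_on f (ends n)"
      using bij_betw_imp_inj_on[OF labellings_bij_betw[OF assms]] .
    show "f (\<pi>1 x) = f (\<pi>2 x)" if "x \<in> ends n" for x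
      using bspec[OF eq[unfolded restrict_eq_iff] that] by simp
  qed
qed

lemma labellings_same_diagram:
  assumes f: "f \<in> labellings n"
  shows "{f' \<in> labellings n. diagram_of n f' = diagram_of n f} = (\<lambda>\<pi>. restrict (f \<circ> \<pi>) (ends n)) ` wreath n"
proof (intro equalityI subsetI)
  fix f' assume f': "f' \<in> {f' \<in> labellings n. diagram_of n f' = diagram_of n f}"
  then obtain \<pi> where \<pi>: "\<pi> \<in> wreath n" "\<forall>x\<in>ends n. f' x = f (\<pi> x)"
    using diagram_of_eq_imp_wreath[OF f] by force
  have "f' = restrict f' (ends n)"
    using f' by (auto simp: labellings_def PiE_restrict)
  also have "\<dots> = restrict (f \<circ> \<pi>) (ends n)"
    using \<pi>(2) unfolding restrict_eq_iff by simp
  finally show "f' \<in> (\<lambda>\<pi>. restrict (f \<circ> \<pi>) (ends n)) ` wreath n"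
    using \<pi>(1) by blast
next
  fix f' assume "f' \<in> (\<lambda>\<pi>. restrict (f \<circ> \<pi>) (ends n)) ` wreath n"
  then obtain \<pi> where \<pi>: "\<pi> \<in> wreath n" "f' = restrict (f \<circ> \<pi>) (ends n)"
    by blast
  have "diagram_of n f' = diagram_of n (f \<circ> \<pi>)"
    unfolding \<pi>(2) by (rule diagram_of_cong) simp
  then show "f' \<in> {f' \<in> labellings n. diagram_of n f' = diagram_of n f}"
    using labelling_comp_wreath[OF f \<pi>(1)] diagram_of_comp_wreath[OF \<pi>(1)] \<pi>(2) by simp
qed

lemma card_labellings_of_diagram:
  assumes "chord_diagram n M"
  shows "card {f \<in> labellings n. diagram_of n f = M} = card (wreath n)"
proof -
  obtain f0 where f0: "f0 \<in> labellings n" "diagram_of n f0 = M"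
    using chord_diagram_labelling[OF assms] by blast
  then have "{f \<in> labellings n. diagram_of n f = M} = (\<lambda>\<pi>. restrict (f0 \<circ> \<pi>) (ends n)) ` wreath n"
    using labellings_same_diagram[OF f0(1)] by simp
  then show ?thesis
    using card_image[OF inj_on_restrict_comp_wreath[OF f0(1)]] by simp
qed

text \<open>The wreath product acts freely on the labellings, so \<open>g \<circ> f\<close> is obtained from \<open>f\<close> by at
  most one element of the wreath product, and by one exactly when \<open>g\<close> fixes the diagram of \<open>f\<close>.\<close>

lemma card_wreath_conjugating:
  assumes f: "f \<in> labellings n" and g: "g permutes {1..2*n}"
  shows "card {\<pi> \<in> wreath n. \<forall>x\<in>ends n. f (\<pi> x) = g (f x)} =
    (if (\<lambda>e. g ` e) ` diagram_of n f = diagram_of n f then 1 else 0)"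
proof -
  let ?\<Psi> = "\<lambda>\<pi>. restrict (f \<circ> \<pi>) (ends n)" and ?f' = "restrict (g \<circ> f) (ends n)"
  have "(\<forall>x\<in>ends n. f (\<pi> x) = g (f x)) \<longleftrightarrow> ?\<Psi> \<pi> = ?f'" for \<pi>
    unfolding restrict_eq_iff by simp
  then have "card {\<pi> \<in> wreath n. \<forall>x\<in>ends n. f (\<pi> x) = g (f x)} = (if ?f' \<in> ?\<Psi> ` wreath n then 1 else 0)"
    using card_fiber_inj_on[OF inj_on_restrict_comp_wreath[OF f], of ?f'] by simp
  also have "?f' \<in> ?\<Psi> ` wreath n \<longleftrightarrow> diagram_of n ?f' = diagram_of n f"
    using labellings_same_diagram[OF f] labelling_comp_permutes[OF f g] by blast
  also have "diagram_of n ?f' = (\<lambda>e. g ` e) ` diagram_of n f"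
    using diagram_of_cong[of n ?f' "g \<circ> f"] diagram_of_comp[of n g f] by simp
  finally show ?thesis .
qed

lemma sum_card_equivariant_labellings:
  assumes g: "g permutes {1..2*n}"
  shows "(\<Sum>\<pi>\<in>wreath n. card (equivariant_bijections \<pi> (ends n) g {1..2*n})) =
    card (wreath n) * card {M. chord_diagram n M \<and> (\<lambda>e. g ` e) ` M = M}"
proof -
  let ?Fix = "{M. chord_diagram n M \<and> (\<lambda>e. g ` e) ` M = M}"
  have "(\<Sum>\<pi>\<in>wreath n. card (equivariant_bijections \<pi> (ends n) g {1..2*n})) =
      (\<Sum>\<pi>\<in>wreath n. card {f \<in> labellings n. \<forall>x\<in>ends n. f (\<pi> x) = g (f x)})"
    by (simp add: equivariant_bijections_def labellings_def conj_assoc)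
  also have "\<dots> = (\<Sum>f\<in>labellings n. card {\<pi> \<in> wreath n. \<forall>x\<in>ends n. f (\<pi> x) = g (f x)})"
    using finite_wreath finite_labellings by (rule sum_card_filter_swap)
  also have "\<dots> = (\<Sum>f\<in>labellings n. if (\<lambda>e. g ` e) ` diagram_of n f = diagram_of n f then 1 else 0)"
    using card_wreath_conjugating[OF _ g] by (rule sum.cong[OF refl])
  also have "\<dots> = card {f \<in> labellings n. (\<lambda>e. g ` e) ` diagram_of n f = diagram_of n f}"
    using finite_labellings by (simp add: sum.inter_filter[symmetric])
  also have "{f \<in> labellings n. (\<lambda>e. g ` e) ` diagram_of n f = diagram_of n f} =
      (\<Union>M\<in>?Fix. {f \<in> labellings n. diagram_of n f = M})"
    using diagram_of_chord_diagram by auto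
  also have "card \<dots> = (\<Sum>M\<in>?Fix. card {f \<in> labellings n. diagram_of n f = M})"
    by (rule card_UN_disjoint) (auto intro: finite_subset[OF _ finite_chord_diagrams] finite_subset[OF _ finite_labellings])
  also have "\<dots> = card ?Fix * card (wreath n)"
    by (simp add: card_labellings_of_diagram)
  finally show ?thesis
    by simp
qed

theorem theorem1:
  fixes n :: nat and G :: "(nat \<Rightarrow> nat) set"
  assumes "n \<ge> 1" and "circuit_perm_group n G"
  shows "real (card ({M. chord_diagram n M} // diagram_equiv n G)) =
    1 / (real (card (wreath n)) * real (card G)) *
    (\<Sum>\<pi>\<in>wreath n. \<Sum>\<eta>\<in>G.
       (if \<exists>i\<in>{1..2*n}. cyc_count \<pi> ({1..n} \<times> {1..2}) i > cyc_count \<eta> {1..2*n} i then 0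
        else (\<Prod>i\<in>{i\<in>{1..2*n}. cyc_count \<pi> ({1..n} \<times> {1..2}) i > 0}.
          real i ^ cyc_count \<pi> ({1..n} \<times> {1..2}) i *
          falling (cyc_count \<eta> {1..2*n} i) (cyc_count \<pi> ({1..n} \<times> {1..2}) i))))"
proof -
  let ?Fix = "\<lambda>\<eta>. card {M. chord_diagram n M \<and> (\<lambda>e. \<eta> ` e) ` M = M}"
  have perm: "\<And>\<eta>. \<eta> \<in> G \<Longrightarrow> \<eta> permutes {1..2*n}" and "finite G" "G \<noteq> {}"
    using assms(2) unfolding circuit_perm_group_def by auto
  have "card G > 0" "card (wreath n) > 0"
    using \<open>finite G\<close> \<open>G \<noteq> {}\<close> finite_wreath id_in_wreath by (auto simp: card_gt_0_iff)
  have summand: "(if \<exists>i\<in>{1..2*n}. cyc_count \<pi> (ends n) i > cyc_count \<eta> {1..2*n} i then 0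
        else \<Prod>i\<in>{i\<in>{1..2*n}. cyc_count \<pi> (ends n) i > 0}.
          real i ^ cyc_count \<pi> (ends n) i * falling (cyc_count \<eta> {1..2*n} i) (cyc_count \<pi> (ends n) i))
      = real (card (equivariant_bijections \<pi> (ends n) \<eta> {1..2*n}))" if "\<pi> \<in> wreath n" "\<eta> \<in> G" for \<pi> \<eta>
    using card_equivariant_bijections[of "ends n" "{1..2*n}" \<pi> \<eta> "2*n"]
      permutes_imp_bij[OF wreath_permutes_ends[OF that(1)]] permutes_imp_bij[OF perm[OF that(2)]]
    by (simp add: cycle_product_eq_if card_cartesian_product)
  have fixed: "(\<Sum>\<pi>\<in>wreath n. card (equivariant_bijections \<pi> (ends n) \<eta> {1..2*n})) =
      card (wreath n) * ?Fix \<eta>" if "\<eta> \<in> G" for \<eta>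
    using perm[OF that] by (rule sum_card_equivariant_labellings)
  have "(\<Sum>\<pi>\<in>wreath n. \<Sum>\<eta>\<in>G. real (card (equivariant_bijections \<pi> (ends n) \<eta> {1..2*n}))) =
      (\<Sum>\<eta>\<in>G. real (\<Sum>\<pi>\<in>wreath n. card (equivariant_bijections \<pi> (ends n) \<eta> {1..2*n})))"
    by (subst sum.swap) (simp only: of_nat_sum)
  also have "\<dots> = (\<Sum>\<eta>\<in>G. real (card (wreath n) * ?Fix \<eta>))"
    using fixed by (intro sum.cong refl) (simp only:)
  also have "\<dots> = real (card (wreath n)) * real (\<Sum>\<eta>\<in>G. ?Fix \<eta>)"
    by (simp add: sum_distrib_left)
  also have "\<dots> = real (card (wreath n)) * real (card ({M. chord_diagram n M} // diagram_equiv n G) * card G)"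
    by (simp only: card_diagram_classes_burnside[OF assms(2)])
  finally show ?thesis
    using summand \<open>card G > 0\<close> \<open>card (wreath n) > 0\<close> by (simp cong: sum.cong)
qed

end
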